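(* Consider the networked $SIRS$-$V_o$ system without media actuator (i.e. $m\equiv 0$) described in the context, with initial condition at time $t_0$ satisfying $o_i(t_0),s_i(t_0),x_i(t_0),r_i(t_0),v_i(t_0)\in[0,1]$ and $s_i(t_0)+x_i(t_0)+r_i(t_0)+v_i(t_0)=1$ for all $i\in[n]$. Then for all $t>t_0$ and all $i\in[n]$: $s_i(t)+x_i(t)+r_i(t)+v_i(t)=1$ and $s_i(t),x_i(t),r_i(t),v_i(t)\in[0,1]$.
   Context: There are $n$ nodes, $[n]=\{1,\dots,n\}$. All parameters are real and nonnegative: $a_{ij}$ (opinion-network weights), $\beta_{ij}$ (infection rates), $\gamma_i$ (recovery rates), $\omega_i$ (loss of natural immunity rates), $\delta_i$ (loss of vaccine immunity rates), $\eta^{\min}_{ij}$ and $\Delta\eta_{ij}$ (strategy-imitation rates). Let $A=[a_{ij}]$, $B=[\beta_{ij}]$, $H_{\min}=[\eta^{\min}_{ij}]$, $\Delta H=[\Delta\eta_{ij}]$. For a square matrix $M$, $k_i[M]=\sum_j M_{ij}$, $\widetilde K[M]=\mathrm{diag}(k_1[M],\dots,k_n[M])$ and $L[M]=\widetilde K[M]-M$. Let $\widetilde G=\mathrm{diag}(\gamma_i)$, $\widetilde W=\mathrm{diag}(\omega_i)$, $\widetilde D=\mathrm{diag}(\delta_i)$, and for $o\in\mathbb{R}^n$ let $H(o)=\mathrm{diag}(o)\Delta H+H_{\min}$. The state is $(o,s,x,r,v)\in(\mathbb{R}^n)^5$ (opinion on disease seriousness, susceptible, infected, recovered, vaccinated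 fractions), with $\widetilde S=\mathrm{diag}(s)$, $\widetilde R=\mathrm{diag}(r)$, and dynamics $\dot o=A(x-o)-2L[A]o$, $\dot s=\widetilde Dv-\widetilde S(Bx+H(o)v)+\widetilde Wr$, $\dot x=\widetilde SBx-\widetilde Gx$, $\dot r=\widetilde Gx-\widetilde Wr-\widetilde RH(o)v$, $\dot v=(\widetilde S+\widetilde R)H(o)v-\widetilde Dv$. *)

theory Defs
  imports "HOL-Analysis.Analysis"
begin

text \<open>Nodes are the elements of a finite type 'n (so n = CARD('n)).
  Vectors are real^'n, matrices real^'n^'n.\<close>

definition diagm :: "real^'n \<Rightarrow> real^'n^'n" where
  "diagm d = (\<chi> i j. if i = j then d$i else 0)"

definition kdeg :: "real^'n^'n::finite \<Rightarrow> 'n \<Rightarrow> real" where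
  "kdeg M i = (\<Sum>j\<in>UNIV. M$i$j)"

definition Kmat :: "real^'n^'n::finite \<Rightarrow> real^'n^'n" where
  "Kmat M = diagm (\<chi> i. kdeg M i)"

definition Lap :: "real^'n^'n::finite \<Rightarrow> real^'n^'n" where
  "Lap M = Kmat M - M"

definition Hmat :: "real^'n^'n \<Rightarrow> real^'n^'n \<Rightarrow> real^'n \<Rightarrow> real^'n^'n" where
  "Hmat Hmin DH ov = diagm ov ** DH + Hmin"

definition sirsvo_solution ::
  "real^'n^'n::finite \<Rightarrow> real^'n^'n \<Rightarrow> real^'n \<Rightarrow> real^'n \<Rightarrow> real^'n \<Rightarrow>
   real^'n^'n \<Rightarrow> real^'n^'n \<Rightarrow> real \<Rightarrow>
   (real \<Rightarrow> real^'n) \<Rightarrow> (real \<Rightarrow> real^'n) \<Rightarrow> (real \<Rightarrow> real^'n) \<Rightarrow>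
   (real \<Rightarrow> real^'n) \<Rightarrow> (real \<Rightarrow> real^'n) \<Rightarrow> bool" where
  "sirsvo_solution A B \<gamma> \<omega> \<delta> Hmin DH t0 op s x r v \<longleftrightarrow>
    (\<forall>t\<ge>t0.
      (op has_vector_derivative (A *v (x t - op t) - 2 *\<^sub>R (Lap A *v op t))) (at t within {t0..}) \<and>
      (s has_vector_derivative
         (diagm \<delta> *v v t - diagm (s t) *v (B *v x t + Hmat Hmin DH (op t) *v v t) + diagm \<omega> *v r t))
         (at t within {t0..}) \<and>
      (x has_vector_derivative (diagm (s t) *v (B *v x t) - diagm \<gamma> *v x t)) (at t within {t0..}) \<and>
      (r has_vector_derivative
         (diagm \<gamma> *v x t - diagm \<omega> *v r t - diagm (r t) *v (Hmat Hmin DH (op t) *v v t)))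
         (at t within {t0..}) \<and>
      (v has_vector_derivative
         ((diagm (s t) + diagm (r t)) *v (Hmat Hmin DH (op t) *v v t) - diagm \<delta> *v v t))
         (at t within {t0..}))"

end

theory Submission
  imports Defs
begin

(* Conservation: the rates of s, x, r and v sum to zero, so s + x + r + v stays 1 at every node.
   Positivity: the vector field is quasi-positive in a quantitative form -- if every compartment is
   at least -\<epsilon> and bounded by R, then each nonpositive compartment has rate at least -C \<epsilon>, with C
   depending only on R and the parameters. On a time interval of length less than 1/C, the most
   negative value -\<epsilon> of any compartment would have to be reached from a nonnegative value with
   slope at least -C \<epsilon>, which is impossible; stepping through [t0, t] in such intervals shows that
   no compartment ever becomes negative. *)

lemma has_real_derivative_vec_nth:
  fixes f :: "real \<Rightarrow> real^'n"
  assumes "(f has_vector_derivative D) F"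
  shows "((\<lambda>t. f t $ i) has_real_derivative D $ i) F"
  using bounded_linear.has_vector_derivative[OF bounded_linear_vec_nth assms]
  by (simp add: has_real_derivative_iff_has_vector_derivative)

lemma lower_bound_from_nonneg_start:
  fixes g g' :: "real \<Rightarrow> real"
  assumes "a \<le> b" and "0 \<le> M" and "0 \<le> g a"
    and deriv: "\<And>t. t \<in> {a..b} \<Longrightarrow> (g has_real_derivative g' t) (at t within {a..b})"
    and slope: "\<And>t. t \<in> {a<..<b} \<Longrightarrow> g t < 0 \<Longrightarrow> -M \<le> g' t"
  shows "-M * (b - a) \<le> g b"
proof (cases "0 \<le> g b")
  case True
  moreover have "0 \<le> M * (b - a)" using assms(1,2) by simp
  ultimately show ?thesis by linarith
next
  case False
  have cont: "continuous_on {a..b} g"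
    using deriv DERIV_continuous continuous_on_eq_continuous_within by blast
  define Z where "Z = {a..b} \<inter> g -` {0..}"
  have "closed Z"
    unfolding Z_def using cont by (intro continuous_closed_preimage) auto
  moreover have "a \<in> Z" "bdd_above Z"
    unfolding Z_def using assms by auto
  ultimately have "Sup Z \<in> Z"
    using closed_contains_Sup by blast
  define c where "c = Sup Z"
  have c: "a \<le> c" "c < b" "0 \<le> g c"
    using \<open>Sup Z \<in> Z\<close> False unfolding c_def Z_def by (auto simp: order_le_less)
  have neg_after_c: "g t < 0" if "t \<in> {c<..b}" for t
    using that cSup_upper[OF _ \<open>bdd_above Z\<close>, of t] c unfolding c_def Z_def by force
  have "(g has_derivative (*) (g' t)) (at t within {c..b})" if "c \<le> t" "t \<le> b" for t
    using that c by (intro has_field_derivative_imp_has_derivative DERIV_subset[OF deriv]) auto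
  then obtain z where z: "z \<in> {c<..<b}" and mvt: "g b - g c = g' z * (b - c)"
    using mvt_simple[OF \<open>c < b\<close>, of g "\<lambda>t. (*) (g' t)"] by blast
  have "-M \<le> g' z"
    using z c neg_after_c by (intro slope) auto
  then have "-M * (b - c) \<le> g b - g c"
    using mvt c mult_right_mono[of "-M" "g' z" "b - c"] by simp
  moreover have "-M * (b - a) \<le> -M * (b - c)"
    using c \<open>0 \<le> M\<close> by (simp add: mult_left_mono)
  ultimately show ?thesis using c by linarith
qed

lemma nonneg_on_short_interval:
  fixes y f :: "'k \<Rightarrow> real \<Rightarrow> real"
  assumes "finite K" and "a \<le> b" and "0 \<le> C" and "C * (b - a) < 1"
    and deriv: "\<And>k t. k \<in> K \<Longrightarrow> t \<in> {a..b} \<Longrightarrow> (y k has_real_derivative f k t) (at t within {a..b})"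
    and start: "\<And>k. k \<in> K \<Longrightarrow> 0 \<le> y k a"
    and quasi_pos: "\<And>k t \<epsilon>. k \<in> K \<Longrightarrow> t \<in> {a..b} \<Longrightarrow> 0 \<le> \<epsilon> \<Longrightarrow> \<forall>j\<in>K. -\<epsilon> \<le> y j t \<Longrightarrow>
      y k t \<le> 0 \<Longrightarrow> -(C * \<epsilon>) \<le> f k t"
    and "k \<in> K" and "t \<in> {a..b}"
  shows "0 \<le> y k t"
proof (rule ccontr)
  assume "\<not> 0 \<le> y k t"
  define V where "V = (\<Union>j\<in>K. y j ` {a..b})"
  have "continuous_on {a..b} (y j)" if "j \<in> K" for j
    using deriv[OF that] DERIV_continuous continuous_on_eq_continuous_within by blast
  then have "compact V"
    unfolding V_def using \<open>finite K\<close> by (intro compact_UN compact_continuous_image) auto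
  moreover have "y k t \<in> V"
    unfolding V_def using \<open>k \<in> K\<close> \<open>t \<in> {a..b}\<close> by blast
  ultimately obtain m where "m \<in> V" and m_min: "\<forall>w\<in>V. m \<le> w"
    using compact_attains_inf by (metis empty_iff)
  then obtain k1 t1 where k1: "k1 \<in> K" and t1: "t1 \<in> {a..b}" and m: "m = y k1 t1"
    unfolding V_def by blast
  define \<epsilon> where "\<epsilon> = - m"
  have "0 < \<epsilon>"
    using m_min \<open>y k t \<in> V\<close> \<open>\<not> 0 \<le> y k t\<close> unfolding \<epsilon>_def by fastforce
  have above_min: "-\<epsilon> \<le> y j s" if "j \<in> K" "s \<in> {a..b}" for j s
    using m_min that unfolding V_def \<epsilon>_def by auto
  have "-(C * \<epsilon>) * (t1 - a) \<le> y k1 t1"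
  proof (rule lower_bound_from_nonneg_start)
    show "(y k1 has_real_derivative f k1 s) (at s within {a..t1})" if "s \<in> {a..t1}" for s
      using that t1 by (intro DERIV_subset[OF deriv[OF k1]]) auto
    show "-(C * \<epsilon>) \<le> f k1 s" if "s \<in> {a<..<t1}" "y k1 s < 0" for s
      using that t1 above_min \<open>0 < \<epsilon>\<close> by (auto intro!: quasi_pos[OF k1])
  qed (use t1 start[OF k1] \<open>0 \<le> C\<close> \<open>0 < \<epsilon>\<close> in auto)
  moreover have "C * \<epsilon> * (t1 - a) < \<epsilon>"
  proof -
    have "C * (t1 - a) < 1"
      using t1 \<open>0 \<le> C\<close> \<open>C * (b - a) < 1\<close> mult_left_mono[of "t1 - a" "b - a" C] by auto
    then show ?thesis
      using \<open>0 < \<epsilon>\<close> mult_strict_left_mono[of "C * (t1 - a)" 1 \<epsilon>] by (simp add: ac_simps)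
  qed
  ultimately show False
    using m unfolding \<epsilon>_def by simp
qed

lemma nonneg_on_interval_if_quasi_positive:
  fixes y f :: "'k \<Rightarrow> real \<Rightarrow> real"
  assumes "finite K" and "0 \<le> C"
    and deriv: "\<And>k t. k \<in> K \<Longrightarrow> t \<in> {a..b} \<Longrightarrow> (y k has_real_derivative f k t) (at t within {a..b})"
    and start: "\<And>k. k \<in> K \<Longrightarrow> 0 \<le> y k a"
    and quasi_pos: "\<And>k t \<epsilon>. k \<in> K \<Longrightarrow> t \<in> {a..b} \<Longrightarrow> 0 \<le> \<epsilon> \<Longrightarrow> \<forall>j\<in>K. -\<epsilon> \<le> y j t \<Longrightarrow>
      y k t \<le> 0 \<Longrightarrow> -(C * \<epsilon>) \<le> f k t"
    and "k \<in> K" and "t \<in> {a..b}"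
  shows "0 \<le> y k t"
proof -
  define h where "h = 1 / (C + 1)"
  have "0 < h" and "C * h < 1"
    using \<open>0 \<le> C\<close> unfolding h_def by (auto simp: field_simps)
  have "\<forall>j\<in>K. \<forall>s\<in>{a..b}. s \<le> a + real n * h \<longrightarrow> 0 \<le> y j s" for n
  proof (induction n)
    case 0
    then show ?case using start by auto
  next
    case (Suc n)
    show ?case
    proof (intro ballI impI)
      fix j s assume "j \<in> K" "s \<in> {a..b}" "s \<le> a + real (Suc n) * h"
      define a' where "a' = a + real n * h"
      show "0 \<le> y j s"
      proof (cases "s \<le> a'")
        case True
        then show ?thesis using Suc.IH \<open>j \<in> K\<close> \<open>s \<in> {a..b}\<close> unfolding a'_def by blast
      next
        case False
        have "a \<le> a'" "a' \<le> s" "s \<in> {a'..s}" "s - a' \<le> h"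
          using False \<open>0 < h\<close> \<open>s \<le> a + real (Suc n) * h\<close> unfolding a'_def
          by (auto simp: algebra_simps)
        have short: "C * (s - a') < 1"
          using \<open>s - a' \<le> h\<close> \<open>0 \<le> C\<close> \<open>C * h < 1\<close> mult_left_mono[of "s - a'" h C] by linarith
        have deriv': "(y i has_real_derivative f i r) (at r within {a'..s})"
          if "i \<in> K" "r \<in> {a'..s}" for i r
          using that \<open>a \<le> a'\<close> \<open>s \<in> {a..b}\<close> by (intro DERIV_subset[OF deriv]) auto
        have start': "0 \<le> y i a'" if "i \<in> K" for i
          using Suc.IH that \<open>a \<le> a'\<close> \<open>a' \<le> s\<close> \<open>s \<in> {a..b}\<close> unfolding a'_def by auto
        have quasi_pos': "-(C * \<epsilon>) \<le> f i r"
          if "i \<in> K" "r \<in> {a'..s}" "0 \<le> \<epsilon>" "\<forall>i\<in>K. -\<epsilon> \<le> y i r" "y i r \<le> 0" for i r \<epsilon>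
          using that \<open>a \<le> a'\<close> \<open>s \<in> {a..b}\<close> by (intro quasi_pos) auto
        show ?thesis
          using \<open>finite K\<close> \<open>a' \<le> s\<close> \<open>0 \<le> C\<close> short deriv' start' quasi_pos' \<open>j \<in> K\<close> \<open>s \<in> {a'..s}\<close>
          by (rule nonneg_on_short_interval[where y = y and f = f])
      qed
    qed
  qed
  moreover obtain n :: nat where "(t - a) / h < n"
    using reals_Archimedean2 by blast
  then have "t \<le> a + real n * h"
    using \<open>0 < h\<close> by (simp add: field_simps)
  ultimately show ?thesis
    using \<open>k \<in> K\<close> \<open>t \<in> {a..b}\<close> by blast
qed

lemma nonneg_invariant_if_quasi_positive:
  fixes y f :: "'k \<Rightarrow> real \<Rightarrow> real"
  assumes "finite K"
    and deriv: "\<And>k t. k \<in> K \<Longrightarrow> t0 \<le> t \<Longrightarrow> (y k has_real_derivative f k t) (at t within {t0..})"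
    and init: "\<And>k. k \<in> K \<Longrightarrow> 0 \<le> y k t0"
    and quasi_pos: "\<And>R k. 0 \<le> R \<Longrightarrow> k \<in> K \<Longrightarrow> \<exists>C. \<forall>t\<ge>t0. \<forall>\<epsilon>\<ge>0.
      (\<forall>j\<in>K. -\<epsilon> \<le> y j t \<and> \<bar>y j t\<bar> \<le> R) \<longrightarrow> y k t \<le> 0 \<longrightarrow> -(C * \<epsilon>) \<le> f k t"
    and "k \<in> K" and "t0 \<le> t"
  shows "0 \<le> y k t"
proof -
  have deriv': "(y j has_real_derivative f j s) (at s within {t0..t})" if "j \<in> K" "s \<in> {t0..t}" for j s
    using that by (intro DERIV_subset[OF deriv]) auto
  have "continuous_on {t0..t} (y j)" if "j \<in> K" for j
    using deriv'[OF that] DERIV_continuous continuous_on_eq_continuous_within by blast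
  then have "bounded (\<Union>j\<in>K. y j ` {t0..t})"
    using \<open>finite K\<close> by (intro compact_imp_bounded compact_UN compact_continuous_image) auto
  then obtain R0 where "\<forall>w\<in>(\<Union>j\<in>K. y j ` {t0..t}). \<bar>w\<bar> \<le> R0"
    unfolding bounded_real by blast
  then obtain R where R: "0 \<le> R" "\<And>j s. j \<in> K \<Longrightarrow> s \<in> {t0..t} \<Longrightarrow> \<bar>y j s\<bar> \<le> R"
    by (metis (no_types, lifting) UN_I abs_ge_zero image_eqI order_trans max.cobounded1 max.cobounded2)
  obtain Ck where Ck: "\<And>j s \<epsilon>. j \<in> K \<Longrightarrow> t0 \<le> s \<Longrightarrow> 0 \<le> \<epsilon> \<Longrightarrow>
      \<forall>i\<in>K. -\<epsilon> \<le> y i s \<and> \<bar>y i s\<bar> \<le> R \<Longrightarrow> y j s \<le> 0 \<Longrightarrow> -(Ck j * \<epsilon>) \<le> f j s"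
    using quasi_pos[OF \<open>0 \<le> R\<close>] by metis
  define C where "C = (\<Sum>j\<in>K. \<bar>Ck j\<bar>)"
  have "0 \<le> C"
    unfolding C_def by (simp add: sum_nonneg)
  have quasi_pos_C: "-(C * \<epsilon>) \<le> f j s"
    if "j \<in> K" "s \<in> {t0..t}" "0 \<le> \<epsilon>" "\<forall>i\<in>K. -\<epsilon> \<le> y i s" "y j s \<le> 0" for j s \<epsilon>
  proof -
    have "Ck j \<le> C"
      unfolding C_def using \<open>finite K\<close> that(1) abs_ge_self order_trans
      by (metis (no_types, lifting) abs_ge_zero member_le_sum)
    then have "-(C * \<epsilon>) \<le> -(Ck j * \<epsilon>)"
      using that(3) by (simp add: mult_right_mono)
    also have "\<dots> \<le> f j s"
      using Ck R that by auto
    finally show ?thesis .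
  qed
  have "t \<in> {t0..t}"
    using \<open>t0 \<le> t\<close> by simp
  with \<open>finite K\<close> \<open>0 \<le> C\<close> deriv' init quasi_pos_C \<open>k \<in> K\<close> show ?thesis
    by (rule nonneg_on_interval_if_quasi_positive[where y = y and f = f])
qed

lemma diagm_mult_nth [simp]: "(diagm d *v w) $ i = d $ i * w $ i"
  unfolding diagm_def matrix_vector_mult_def by (simp add: if_distrib if_distribR cong: if_cong)

lemma diagm_add: "diagm a + diagm b = diagm (a + b)"
  unfolding diagm_def by (simp add: vec_eq_iff)

lemma Lap_mult_nth: "(Lap A *v w) $ i = kdeg A i * w $ i - (A *v w) $ i"
  unfolding Lap_def Kmat_def by (simp add: matrix_vector_mult_diff_rdistrib)

lemma Hmat_mult_nth: "(Hmat Hmin DH ov *v w) $ i = ov $ i * (DH *v w) $ i + (Hmin *v w) $ i"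
  unfolding Hmat_def by (simp add: matrix_vector_mult_add_rdistrib matrix_vector_mul_assoc[symmetric])

lemma kdeg_nonneg: "\<forall>i j. 0 \<le> M $ i $ j \<Longrightarrow> 0 \<le> kdeg M i"
  unfolding kdeg_def by (simp add: sum_nonneg)

lemma nonneg_matrix_mult_lower_bound:
  fixes M :: "real^'n^'n::finite"
  assumes "\<forall>i j. 0 \<le> M $ i $ j" and "\<forall>j. -\<epsilon> \<le> w $ j"
  shows "-(kdeg M i * \<epsilon>) \<le> (M *v w) $ i"
proof -
  have "(\<Sum>j\<in>UNIV. M $ i $ j * (-\<epsilon>)) \<le> (\<Sum>j\<in>UNIV. M $ i $ j * w $ j)"
    using assms by (intro sum_mono mult_left_mono) auto
  then show ?thesis
    unfolding matrix_vector_mult_def kdeg_def by (simp add: sum_distrib_right sum_negf)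
qed

lemma nonneg_matrix_mult_abs_le:
  fixes M :: "real^'n^'n::finite"
  assumes "\<forall>i j. 0 \<le> M $ i $ j" and "\<forall>j. \<bar>w $ j\<bar> \<le> R"
  shows "\<bar>(M *v w) $ i\<bar> \<le> kdeg M i * R"
proof -
  have "\<bar>\<Sum>j\<in>UNIV. M $ i $ j * w $ j\<bar> \<le> (\<Sum>j\<in>UNIV. \<bar>M $ i $ j * w $ j\<bar>)"
    by (rule sum_abs)
  also have "\<dots> \<le> (\<Sum>j\<in>UNIV. M $ i $ j * R)"
    using assms by (intro sum_mono) (simp add: abs_mult mult_left_mono)
  finally show ?thesis
    unfolding matrix_vector_mult_def kdeg_def by (simp add: sum_distrib_right)
qed

lemma mult_lower_bound:
  fixes p q a b P Q :: real
  assumes "-a \<le> p" "\<bar>p\<bar> \<le> P" "-b \<le> q" "\<bar>q\<bar> \<le> Q" "0 \<le> a" "0 \<le> b"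
  shows "-(a * Q + b * P) \<le> p * q"
proof -
  have "0 \<le> a * Q" "0 \<le> b * P"
    using assms abs_ge_zero[of p] abs_ge_zero[of q] by simp_all
  consider "0 \<le> p * q" | "0 \<le> p" "q < 0" | "p < 0" "0 \<le> q"
    by (meson linorder_not_le less_imp_le mult_nonneg_nonneg mult_nonpos_nonpos)
  then show ?thesis
  proof cases
    case 1
    then show ?thesis using \<open>0 \<le> a * Q\<close> \<open>0 \<le> b * P\<close> by linarith
  next
    case 2
    have "p * (-b) \<le> p * q" and "p * b \<le> P * b"
      using 2 assms mult_left_mono[of "-b" q p] mult_right_mono[of p P b] by auto
    then show ?thesis using \<open>0 \<le> a * Q\<close> by (simp add: algebra_simps)
  next
    case 3
    have "(-a) * q \<le> p * q" and "a * q \<le> a * Q"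
      using 3 assms mult_right_mono[of "-a" p q] mult_left_mono[of q Q a] by auto
    then show ?thesis using \<open>0 \<le> b * P\<close> by (simp add: algebra_simps)
  qed
qed

definition nearly_nonneg :: "real \<Rightarrow> real \<Rightarrow> real^'n \<Rightarrow> bool" where
  "nearly_nonneg \<epsilon> R w \<longleftrightarrow> (\<forall>i. -\<epsilon> \<le> w $ i \<and> \<bar>w $ i\<bar> \<le> R)"

lemma nearly_nonneg_nth: "nearly_nonneg \<epsilon> R w \<Longrightarrow> -\<epsilon> \<le> w $ i \<and> \<bar>w $ i\<bar> \<le> R"
  unfolding nearly_nonneg_def by blast

lemma Hmat_mult_lower_bound:
  fixes Hmin DH :: "real^'n^'n::finite"
  assumes "\<forall>i j. 0 \<le> Hmin $ i $ j" "\<forall>i j. 0 \<le> DH $ i $ j" "0 \<le> \<epsilon>"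
    and "nearly_nonneg \<epsilon> R ov" "nearly_nonneg \<epsilon> R v"
  shows "-((2 * kdeg DH i * R + kdeg Hmin i) * \<epsilon>) \<le> (Hmat Hmin DH ov *v v) $ i"
proof -
  have "-(\<epsilon> * (kdeg DH i * R) + (kdeg DH i * \<epsilon>) * R) \<le> ov $ i * (DH *v v) $ i"
    using assms kdeg_nonneg[of DH i]
    by (intro mult_lower_bound nonneg_matrix_mult_lower_bound nonneg_matrix_mult_abs_le)
      (auto simp: nearly_nonneg_def)
  moreover have "-(kdeg Hmin i * \<epsilon>) \<le> (Hmin *v v) $ i"
    using assms by (intro nonneg_matrix_mult_lower_bound) (auto simp: nearly_nonneg_def)
  ultimately show ?thesis
    by (simp add: Hmat_mult_nth algebra_simps)
qed

lemma Hmat_mult_abs_le: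
  fixes Hmin DH :: "real^'n^'n::finite"
  assumes "\<forall>i j. 0 \<le> Hmin $ i $ j" "\<forall>i j. 0 \<le> DH $ i $ j"
    and "nearly_nonneg \<epsilon> R ov" "nearly_nonneg \<epsilon> R v"
  shows "\<bar>(Hmat Hmin DH ov *v v) $ i\<bar> \<le> (kdeg DH i * R + kdeg Hmin i) * R"
proof -
  have "\<bar>ov $ i\<bar> * \<bar>(DH *v v) $ i\<bar> \<le> R * (kdeg DH i * R)"
    using assms nonneg_matrix_mult_abs_le[of DH v R i]
    by (intro mult_mono) (auto simp: nearly_nonneg_def)
  moreover have "\<bar>(Hmin *v v) $ i\<bar> \<le> kdeg Hmin i * R"
    using assms by (intro nonneg_matrix_mult_abs_le) (auto simp: nearly_nonneg_def)
  ultimately show ?thesis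
    unfolding Hmat_mult_nth using abs_triangle_ineq[of "ov $ i * (DH *v v) $ i" "(Hmin *v v) $ i"]
    by (simp add: abs_mult algebra_simps)
qed

lemma opinion_rate_lower_bound:
  fixes A :: "real^'n^'n::finite"
  assumes "\<forall>i j. 0 \<le> A $ i $ j" "nearly_nonneg \<epsilon> R x" "nearly_nonneg \<epsilon> R ov" "ov $ i \<le> 0"
  shows "-(2 * kdeg A i * \<epsilon>) \<le> (A *v (x - ov) - 2 *\<^sub>R (Lap A *v ov)) $ i"
proof -
  have "-(kdeg A i * \<epsilon>) \<le> (A *v x) $ i" "-(kdeg A i * \<epsilon>) \<le> (A *v ov) $ i"
    using assms by (auto intro!: nonneg_matrix_mult_lower_bound simp: nearly_nonneg_def)
  moreover have "kdeg A i * ov $ i \<le> 0"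
    using assms kdeg_nonneg[of A i] by (simp add: mult_nonneg_nonpos)
  ultimately show ?thesis
    by (simp add: Lap_mult_nth matrix_vector_mult_diff_distrib algebra_simps)
qed

lemma susceptible_rate_lower_bound:
  fixes B :: "real^'n^'n::finite"
  assumes "\<forall>i j. 0 \<le> B $ i $ j" "0 \<le> \<delta> $ i" "0 \<le> \<omega> $ i" "0 \<le> \<epsilon>" "0 \<le> b"
    and "nearly_nonneg \<epsilon> R s" "nearly_nonneg \<epsilon> R x" "nearly_nonneg \<epsilon> R r" "nearly_nonneg \<epsilon> R v"
    and "-(b * \<epsilon>) \<le> hv $ i" "s $ i \<le> 0"
  shows "-((\<delta> $ i + \<omega> $ i + R * (kdeg B i + b)) * \<epsilon>) \<le>
    (diagm \<delta> *v v - diagm s *v (B *v x + hv) + diagm \<omega> *v r) $ i"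
proof -
  let ?q = "(B *v x + hv) $ i"
  have "-(kdeg B i * \<epsilon>) \<le> (B *v x) $ i"
    using assms by (intro nonneg_matrix_mult_lower_bound) (auto simp: nearly_nonneg_def)
  then have "-(0 * \<bar>?q\<bar> + ((kdeg B i + b) * \<epsilon>) * R) \<le> (- s $ i) * ?q"
    using assms kdeg_nonneg[of B i] nearly_nonneg_nth[OF \<open>nearly_nonneg \<epsilon> R s\<close>, of i]
    by (intro mult_lower_bound) (auto simp: algebra_simps)
  moreover have "-(\<delta> $ i * \<epsilon>) \<le> \<delta> $ i * v $ i" "-(\<omega> $ i * \<epsilon>) \<le> \<omega> $ i * r $ i"
    using assms by (auto simp: nearly_nonneg_def intro: mult_left_mono[of "-\<epsilon>", simplified])
  ultimately show ?thesis
    by (simp add: algebra_simps)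
qed

lemma infected_rate_lower_bound:
  fixes B :: "real^'n^'n::finite"
  assumes "\<forall>i j. 0 \<le> B $ i $ j" "0 \<le> \<gamma> $ i" "0 \<le> \<epsilon>"
    and "nearly_nonneg \<epsilon> R s" "nearly_nonneg \<epsilon> R x" "x $ i \<le> 0"
  shows "-(2 * kdeg B i * R * \<epsilon>) \<le> (diagm s *v (B *v x) - diagm \<gamma> *v x) $ i"
proof -
  have "-(\<epsilon> * (kdeg B i * R) + (kdeg B i * \<epsilon>) * R) \<le> s $ i * (B *v x) $ i"
    using assms kdeg_nonneg[of B i]
    by (intro mult_lower_bound nonneg_matrix_mult_lower_bound nonneg_matrix_mult_abs_le)
      (auto simp: nearly_nonneg_def)
  moreover have "\<gamma> $ i * x $ i \<le> 0"
    using assms by (simp add: mult_nonneg_nonpos)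
  ultimately show ?thesis
    by (simp add: algebra_simps)
qed

lemma recovered_rate_lower_bound:
  assumes "0 \<le> \<gamma> $ i" "0 \<le> \<omega> $ i" "0 \<le> \<epsilon>" "0 \<le> b"
    and "nearly_nonneg \<epsilon> R x" "nearly_nonneg \<epsilon> R r" "-(b * \<epsilon>) \<le> hv $ i" "r $ i \<le> 0"
  shows "-((\<gamma> $ i + R * b) * \<epsilon>) \<le> (diagm \<gamma> *v x - diagm \<omega> *v r - diagm r *v hv) $ i"
proof -
  have "-(0 * \<bar>hv $ i\<bar> + (b * \<epsilon>) * R) \<le> (- r $ i) * hv $ i"
    using assms nearly_nonneg_nth[OF \<open>nearly_nonneg \<epsilon> R r\<close>, of i] by (intro mult_lower_bound) auto
  moreover have "-(\<gamma> $ i * \<epsilon>) \<le> \<gamma> $ i * x $ i"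
    using assms by (auto simp: nearly_nonneg_def intro: mult_left_mono[of "-\<epsilon>", simplified])
  moreover have "\<omega> $ i * r $ i \<le> 0"
    using assms by (simp add: mult_nonneg_nonpos)
  ultimately show ?thesis
    by (simp add: algebra_simps)
qed

lemma vaccinated_rate_lower_bound:
  assumes "0 \<le> \<delta> $ i" "0 \<le> \<epsilon>" "0 \<le> b"
    and "nearly_nonneg \<epsilon> R s" "nearly_nonneg \<epsilon> R r"
    and "-(b * \<epsilon>) \<le> hv $ i" "\<bar>hv $ i\<bar> \<le> Q" "v $ i \<le> 0"
  shows "-(2 * (Q + R * b) * \<epsilon>) \<le> ((diagm s + diagm r) *v hv - diagm \<delta> *v v) $ i"
proof -
  have "-((2 * \<epsilon>) * Q + (b * \<epsilon>) * (2 * R)) \<le> (s $ i + r $ i) * hv $ i"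
    using assms nearly_nonneg_nth[OF \<open>nearly_nonneg \<epsilon> R s\<close>, of i]
      nearly_nonneg_nth[OF \<open>nearly_nonneg \<epsilon> R r\<close>, of i] by (intro mult_lower_bound) auto
  moreover have "\<delta> $ i * v $ i \<le> 0"
    using assms by (simp add: mult_nonneg_nonpos)
  ultimately show ?thesis
    by (simp add: diagm_add algebra_simps)
qed

datatype compartment = Opinion | Susceptible | Infected | Recovered | Vaccinated

lemma UNIV_compartment: "(UNIV :: compartment set) = {Opinion, Susceptible, Infected, Recovered, Vaccinated}"
  using compartment.exhaust by auto

instance compartment :: finite
  by standard (simp add: UNIV_compartment)

definition sirsvo_state ::
  "(real \<Rightarrow> real^'n) \<Rightarrow> (real \<Rightarrow> real^'n) \<Rightarrow> (real \<Rightarrow> real^'n) \<Rightarrow> (real \<Rightarrow> real^'n) \<Rightarrow>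
   (real \<Rightarrow> real^'n) \<Rightarrow> real \<Rightarrow> compartment \<Rightarrow> real^'n" where
  "sirsvo_state op s x r v t c = (case c of Opinion \<Rightarrow> op t | Susceptible \<Rightarrow> s t | Infected \<Rightarrow> x t
     | Recovered \<Rightarrow> r t | Vaccinated \<Rightarrow> v t)"

definition sirsvo_field ::
  "real^'n^'n::finite \<Rightarrow> real^'n^'n \<Rightarrow> real^'n \<Rightarrow> real^'n \<Rightarrow> real^'n \<Rightarrow> real^'n^'n \<Rightarrow> real^'n^'n \<Rightarrow>
   (compartment \<Rightarrow> real^'n) \<Rightarrow> compartment \<Rightarrow> real^'n" where
  "sirsvo_field A B \<gamma> \<omega> \<delta> Hmin DH w c =
    (let ov = w Opinion; s = w Susceptible; x = w Infected; r = w Recovered; v = w Vaccinated;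
         hv = Hmat Hmin DH ov *v v
     in case c of
       Opinion \<Rightarrow> A *v (x - ov) - 2 *\<^sub>R (Lap A *v ov)
     | Susceptible \<Rightarrow> diagm \<delta> *v v - diagm s *v (B *v x + hv) + diagm \<omega> *v r
     | Infected \<Rightarrow> diagm s *v (B *v x) - diagm \<gamma> *v x
     | Recovered \<Rightarrow> diagm \<gamma> *v x - diagm \<omega> *v r - diagm r *v hv
     | Vaccinated \<Rightarrow> (diagm s + diagm r) *v hv - diagm \<delta> *v v)"

lemma sirsvo_solution_has_vector_derivative:
  assumes "sirsvo_solution A B \<gamma> \<omega> \<delta> Hmin DH t0 op s x r v" and "t0 \<le> t"
  shows "((\<lambda>t. sirsvo_state op s x r v t c) has_vector_derivative
    sirsvo_field A B \<gamma> \<omega> \<delta> Hmin DH (sirsvo_state op s x r v t) c) (at t within {t0..})"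
  using assms by (cases c) (simp_all add: sirsvo_solution_def sirsvo_state_def sirsvo_field_def Let_def)

lemma sirsvo_field_population_balance:
  "sirsvo_field A B \<gamma> \<omega> \<delta> Hmin DH w Susceptible + sirsvo_field A B \<gamma> \<omega> \<delta> Hmin DH w Infected
    + sirsvo_field A B \<gamma> \<omega> \<delta> Hmin DH w Recovered + sirsvo_field A B \<gamma> \<omega> \<delta> Hmin DH w Vaccinated = 0"
  by (simp add: sirsvo_field_def Let_def vec_eq_iff diagm_add[symmetric] algebra_simps)

lemma sirsvo_population_constant:
  assumes "sirsvo_solution A B \<gamma> \<omega> \<delta> Hmin DH t0 op s x r v" and "t0 \<le> t"
  shows "s t + x t + r t + v t = s t0 + x t0 + r t0 + v t0"
proof -
  have "((\<lambda>t. s t + x t + r t + v t) has_derivative (\<lambda>h. 0)) (at \<tau> within {t0..})" if "\<tau> \<in> {t0..}" for \<tau>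
  proof -
    let ?w = "sirsvo_state op s x r v"
    let ?F = "sirsvo_field A B \<gamma> \<omega> \<delta> Hmin DH (?w \<tau>)"
    have "((\<lambda>t. ?w t c) has_vector_derivative ?F c) (at \<tau> within {t0..})" for c
      using sirsvo_solution_has_vector_derivative[OF assms(1)] that by simp
    then have "((\<lambda>t. ?w t Susceptible + ?w t Infected + ?w t Recovered + ?w t Vaccinated)
        has_vector_derivative ?F Susceptible + ?F Infected + ?F Recovered + ?F Vaccinated)
        (at \<tau> within {t0..})"
      by (intro has_vector_derivative_add)
    then show ?thesis
      by (simp add: sirsvo_field_population_balance sirsvo_state_def has_vector_derivative_def)
  qed
  then obtain c where "\<forall>\<tau>\<in>{t0..}. s \<tau> + x \<tau> + r \<tau> + v \<tau> = c"
    using has_derivative_zero_constant[OF convex_real_interval(1)] by blast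
  then show ?thesis
    using \<open>t0 \<le> t\<close> by simp
qed

lemma sirsvo_field_quasi_positive:
  fixes A B Hmin DH :: "real^'n^'n::finite"
  assumes "\<forall>i j. 0 \<le> A $ i $ j" "\<forall>i j. 0 \<le> B $ i $ j" "\<forall>i j. 0 \<le> Hmin $ i $ j" "\<forall>i j. 0 \<le> DH $ i $ j"
    and "\<forall>i. 0 \<le> \<gamma> $ i" "\<forall>i. 0 \<le> \<omega> $ i" "\<forall>i. 0 \<le> \<delta> $ i"
  shows "\<exists>C. \<forall>\<epsilon>\<ge>0. \<forall>w. (\<forall>c'. nearly_nonneg \<epsilon> R (w c')) \<longrightarrow> w c $ i \<le> 0 \<longrightarrow>
    -(C * \<epsilon>) \<le> sirsvo_field A B \<gamma> \<omega> \<delta> Hmin DH w c $ i"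
proof -
  define b where "b = 2 * kdeg DH i * R + kdeg Hmin i"
  define Q where "Q = (kdeg DH i * R + kdeg Hmin i) * R"
  let ?hv = "\<lambda>w. Hmat Hmin DH (w Opinion) *v w Vaccinated"
  have hv: "0 \<le> b" "-(b * \<epsilon>) \<le> ?hv w $ i" "\<bar>?hv w $ i\<bar> \<le> Q"
    if "0 \<le> \<epsilon>" "\<forall>c'. nearly_nonneg \<epsilon> R (w c')" for \<epsilon> w
  proof -
    have "0 \<le> R"
      using nearly_nonneg_nth[of \<epsilon> R "w Opinion" i] that by fastforce
    then show "0 \<le> b"
      unfolding b_def using kdeg_nonneg[OF assms(3), of i] kdeg_nonneg[OF assms(4), of i] by simp
    show "-(b * \<epsilon>) \<le> ?hv w $ i" "\<bar>?hv w $ i\<bar> \<le> Q"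
      unfolding b_def Q_def using assms that by (auto intro: Hmat_mult_lower_bound Hmat_mult_abs_le)
  qed
  show ?thesis
  proof (cases c)
    case Opinion
    show ?thesis
      unfolding Opinion sirsvo_field_def Let_def compartment.case
      using assms by (intro exI[of _ "2 * kdeg A i"] allI impI opinion_rate_lower_bound) auto
  next
    case Susceptible
    show ?thesis
      unfolding Susceptible sirsvo_field_def Let_def compartment.case
      using assms hv by (intro exI[of _ "\<delta> $ i + \<omega> $ i + R * (kdeg B i + b)"] allI impI susceptible_rate_lower_bound) auto
  next
    case Infected
    show ?thesis
      unfolding Infected sirsvo_field_def Let_def compartment.case
      using assms by (intro exI[of _ "2 * kdeg B i * R"] allI impI infected_rate_lower_bound) auto
  next
    case Recovered
    show ?thesis
      unfolding Recovered sirsvo_field_def Let_def compartment.case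
      using assms hv by (intro exI[of _ "\<gamma> $ i + R * b"] allI impI recovered_rate_lower_bound) auto
  next
    case Vaccinated
    show ?thesis
      unfolding Vaccinated sirsvo_field_def Let_def compartment.case
      using assms hv by (intro exI[of _ "2 * (Q + R * b)"] allI impI vaccinated_rate_lower_bound) auto
  qed
qed

lemma sirsvo_state_nonneg:
  fixes A B Hmin DH :: "real^'n^'n::finite"
  assumes "\<forall>i j. 0 \<le> A $ i $ j" "\<forall>i j. 0 \<le> B $ i $ j" "\<forall>i j. 0 \<le> Hmin $ i $ j" "\<forall>i j. 0 \<le> DH $ i $ j"
    and "\<forall>i. 0 \<le> \<gamma> $ i" "\<forall>i. 0 \<le> \<omega> $ i" "\<forall>i. 0 \<le> \<delta> $ i"
    and sol: "sirsvo_solution A B \<gamma> \<omega> \<delta> Hmin DH t0 op s x r v"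
    and init: "\<And>c i. 0 \<le> sirsvo_state op s x r v t0 c $ i"
    and "t0 \<le> t"
  shows "0 \<le> sirsvo_state op s x r v t c $ i"
proof -
  define y where "y = (\<lambda>(c, i) t. sirsvo_state op s x r v t c $ i)"
  define f where "f = (\<lambda>(c, i) t. sirsvo_field A B \<gamma> \<omega> \<delta> Hmin DH (sirsvo_state op s x r v t) c $ i)"
  have "(y k has_real_derivative f k \<tau>) (at \<tau> within {t0..})" if "t0 \<le> \<tau>" for k \<tau>
    unfolding y_def f_def using sirsvo_solution_has_vector_derivative[OF sol that]
    by (cases k) (simp add: has_real_derivative_vec_nth)
  moreover have "\<exists>C. \<forall>\<tau>\<ge>t0. \<forall>\<epsilon>\<ge>0. (\<forall>j\<in>UNIV. -\<epsilon> \<le> y j \<tau> \<and> \<bar>y j \<tau>\<bar> \<le> R) \<longrightarrow>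
      y k \<tau> \<le> 0 \<longrightarrow> -(C * \<epsilon>) \<le> f k \<tau>" for R k
  proof (cases k)
    case (Pair c i)
    obtain C where C: "\<forall>\<epsilon>\<ge>0. \<forall>w. (\<forall>c'. nearly_nonneg \<epsilon> R (w c')) \<longrightarrow> w c $ i \<le> 0 \<longrightarrow>
        -(C * \<epsilon>) \<le> sirsvo_field A B \<gamma> \<omega> \<delta> Hmin DH w c $ i"
      using sirsvo_field_quasi_positive[OF assms(1-7)] by blast
    have "-(C * \<epsilon>) \<le> f k \<tau>"
      if "0 \<le> \<epsilon>" "\<forall>j\<in>UNIV. -\<epsilon> \<le> y j \<tau> \<and> \<bar>y j \<tau>\<bar> \<le> R" "y k \<tau> \<le> 0" for \<tau> \<epsilon>
      using C[rule_format, OF that(1), of "sirsvo_state op s x r v \<tau>"] that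
      unfolding Pair y_def f_def nearly_nonneg_def by auto
    then show ?thesis
      by blast
  qed
  ultimately show ?thesis
    using nonneg_invariant_if_quasi_positive[of UNIV t0 y f "(c, i)" t] init \<open>t0 \<le> t\<close>
    unfolding y_def by auto
qed

theorem lemma1:
  fixes A B Hmin DH :: "real^'n^'n::finite"
    and \<gamma> \<omega> \<delta> :: "real^'n"
    and t0 :: real
    and op s x r v :: "real \<Rightarrow> real^'n"
  assumes "\<forall>i j. A$i$j \<ge> 0" and "\<forall>i j. B$i$j \<ge> 0"
    and "\<forall>i j. Hmin$i$j \<ge> 0" and "\<forall>i j. DH$i$j \<ge> 0"
    and "\<forall>i. \<gamma>$i \<ge> 0" and "\<forall>i. \<omega>$i \<ge> 0" and "\<forall>i. \<delta>$i \<ge> 0"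
    and "sirsvo_solution A B \<gamma> \<omega> \<delta> Hmin DH t0 op s x r v"
    and "\<forall>i. op t0 $ i \<in> {0..1} \<and> s t0 $ i \<in> {0..1} \<and> x t0 $ i \<in> {0..1}
              \<and> r t0 $ i \<in> {0..1} \<and> v t0 $ i \<in> {0..1}"
    and "\<forall>i. s t0 $ i + x t0 $ i + r t0 $ i + v t0 $ i = 1"
  shows "\<forall>t>t0. \<forall>i. s t $ i + x t $ i + r t $ i + v t $ i = 1 \<and>
           s t $ i \<in> {0..1} \<and> x t $ i \<in> {0..1} \<and> r t $ i \<in> {0..1} \<and> v t $ i \<in> {0..1}"
proof (intro allI impI)
  fix t i assume "t0 < t"
  have "0 \<le> sirsvo_state op s x r v t0 c $ i" for c i
    using assms(9) by (cases c) (auto simp: sirsvo_state_def)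
  then have nonneg: "0 \<le> sirsvo_state op s x r v t c $ i" for c
    using sirsvo_state_nonneg[OF assms(1-8)] \<open>t0 < t\<close> by simp
  have "0 \<le> s t $ i" "0 \<le> x t $ i" "0 \<le> r t $ i" "0 \<le> v t $ i"
    using nonneg[of Susceptible] nonneg[of Infected] nonneg[of Recovered] nonneg[of Vaccinated]
    by (simp_all add: sirsvo_state_def)
  moreover have "s t $ i + x t $ i + r t $ i + v t $ i = 1"
    using sirsvo_population_constant[OF assms(8), of t] assms(10) \<open>t0 < t\<close>
    by (metis less_imp_le vector_add_component)
  ultimately show "s t $ i + x t $ i + r t $ i + v t $ i = 1 \<and>
      s t $ i \<in> {0..1} \<and> x t $ i \<in> {0..1} \<and> r t $ i \<in> {0..1} \<and> v t $ i \<in> {0..1}"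
    by auto
qed

end
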